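(* Let $R$ be a subring of a ring $S$, and assume that every semiprime factor ring of $R$ and of $S$ is left or right Goldie and that the prime radical of every factor ring of $R$ and of $S$ is nilpotent. Then for every $P\in\operatorname{Spec} S$ there exists $Q\in\operatorname{Spec} R$ such that $Q$ is minimal over $P\cap R$ and $Q^S\subseteq P$.
   Context: For an ideal $Q$ of $R$, $Q^S=\operatorname{ann}_S(S/SQ)$, the annihilator of the left $S$-module $S/SQ$. *)

theory Defs
  imports "HOL-Algebra.Algebra"
begin

text \<open>All rings are associative rings with identity, not necessarily commutative
(HOL-Algebra's ring). Ideals (ideal I A) are two-sided.\<close>

definition left_ideal :: "('a,'b) ring_scheme \<Rightarrow> 'a set \<Rightarrow> bool" where
  "left_ideal A L \<longleftrightarrow> subgroup L (add_monoid A) \<and>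
     (\<forall>r\<in>carrier A. \<forall>x\<in>L. r \<otimes>\<^bsub>A\<^esub> x \<in> L)"

definition right_ideal :: "('a,'b) ring_scheme \<Rightarrow> 'a set \<Rightarrow> bool" where
  "right_ideal A L \<longleftrightarrow> subgroup L (add_monoid A) \<and>
     (\<forall>r\<in>carrier A. \<forall>x\<in>L. x \<otimes>\<^bsub>A\<^esub> r \<in> L)"

definition prime_ideal_nc :: "('a,'b) ring_scheme \<Rightarrow> 'a set \<Rightarrow> bool" where
  "prime_ideal_nc A P \<longleftrightarrow> ideal P A \<and> P \<noteq> carrier A \<and>
     (\<forall>a\<in>carrier A. \<forall>b\<in>carrier A.
        (\<forall>r\<in>carrier A. a \<otimes>\<^bsub>A\<^esub> r \<otimes>\<^bsub>A\<^esub> b \<in> P) \<longrightarrow> a \<in> P \<or> b \<in> P)"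

definition Spec :: "('a,'b) ring_scheme \<Rightarrow> 'a set set" where
  "Spec A = {P. prime_ideal_nc A P}"

definition semiprime_ring :: "('a,'b) ring_scheme \<Rightarrow> bool" where
  "semiprime_ring A \<longleftrightarrow>
     (\<forall>a\<in>carrier A. (\<forall>r\<in>carrier A. a \<otimes>\<^bsub>A\<^esub> r \<otimes>\<^bsub>A\<^esub> a = \<zero>\<^bsub>A\<^esub>) \<longrightarrow> a = \<zero>\<^bsub>A\<^esub>)"

definition left_annihilator :: "('a,'b) ring_scheme \<Rightarrow> 'a set \<Rightarrow> 'a set" where
  "left_annihilator A Y = {r. r \<in> carrier A \<and> (\<forall>x\<in>Y. r \<otimes>\<^bsub>A\<^esub> x = \<zero>\<^bsub>A\<^esub>)}"

definition right_annihilator :: "('a,'b) ring_scheme \<Rightarrow> 'a set \<Rightarrow> 'a set" where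
  "right_annihilator A Y = {r. r \<in> carrier A \<and> (\<forall>x\<in>Y. x \<otimes>\<^bsub>A\<^esub> r = \<zero>\<^bsub>A\<^esub>)}"

definition independent_family :: "('a,'b) ring_scheme \<Rightarrow> (nat \<Rightarrow> 'a set) \<Rightarrow> bool" where
  "independent_family A L \<longleftrightarrow>
     (\<forall>k x. (\<forall>i\<le>k. x i \<in> L i) \<and> finsum A x {..k} = \<zero>\<^bsub>A\<^esub> \<longrightarrow> (\<forall>i\<le>k. x i = \<zero>\<^bsub>A\<^esub>))"

definition left_goldie :: "('a,'b) ring_scheme \<Rightarrow> bool" where
  "left_goldie A \<longleftrightarrow>
     (\<forall>f :: nat \<Rightarrow> 'a set.
        (\<forall>n. (\<exists>Y\<subseteq>carrier A. f n = left_annihilator A Y) \<and> f n \<subseteq> f (Suc n))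
        \<longrightarrow> (\<exists>m. \<forall>n\<ge>m. f n = f m)) \<and>
     \<not> (\<exists>L. (\<forall>n. left_ideal A (L n) \<and> L n \<noteq> {\<zero>\<^bsub>A\<^esub> }) \<and> independent_family A L)"

definition right_goldie :: "('a,'b) ring_scheme \<Rightarrow> bool" where
  "right_goldie A \<longleftrightarrow>
     (\<forall>f :: nat \<Rightarrow> 'a set.
        (\<forall>n. (\<exists>Y\<subseteq>carrier A. f n = right_annihilator A Y) \<and> f n \<subseteq> f (Suc n))
        \<longrightarrow> (\<exists>m. \<forall>n\<ge>m. f n = f m)) \<and>
     \<not> (\<exists>L. (\<forall>n. right_ideal A (L n) \<and> L n \<noteq> {\<zero>\<^bsub>A\<^esub> }) \<and> independent_family A L)"

text \<open>Prime radical: intersection of all prime ideals (the whole ring if there are none).\<close>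
definition prime_radical :: "('a,'b) ring_scheme \<Rightarrow> 'a set" where
  "prime_radical A = carrier A \<inter> \<Inter> (Spec A)"

definition nilpotent_set :: "('a,'b) ring_scheme \<Rightarrow> 'a set \<Rightarrow> bool" where
  "nilpotent_set A N \<longleftrightarrow>
     (\<exists>n. \<forall>xs. length xs = n \<and> set xs \<subseteq> N \<longrightarrow> foldr (\<lambda>x y. x \<otimes>\<^bsub>A\<^esub> y) xs \<one>\<^bsub>A\<^esub> = \<zero>\<^bsub>A\<^esub>)"

text \<open>SQ: the left S-submodule of S generated by Q (finite sums of s q).\<close>
definition left_gen :: "('a,'b) ring_scheme \<Rightarrow> 'a set \<Rightarrow> 'a set" where
  "left_gen S Q = {finsum S (\<lambda>i. s i \<otimes>\<^bsub>S\<^esub> q i) {..<(n::nat)} | n s q.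
       (\<forall>i<n. s i \<in> carrier S \<and> q i \<in> Q)}"

text \<open>Q^S = ann_S(S/SQ) = {x \<in> S. x S \<subseteq> SQ}.\<close>
definition ext_ideal :: "('a,'b) ring_scheme \<Rightarrow> 'a set \<Rightarrow> 'a set" where
  "ext_ideal S Q = {x \<in> carrier S. \<forall>s\<in>carrier S. x \<otimes>\<^bsub>S\<^esub> s \<in> left_gen S Q}"

definition minimal_prime_over :: "('a,'b) ring_scheme \<Rightarrow> 'a set \<Rightarrow> 'a set \<Rightarrow> bool" where
  "minimal_prime_over A I Q \<longleftrightarrow> Q \<in> Spec A \<and> I \<subseteq> Q \<and>
     (\<forall>Q'\<in>Spec A. I \<subseteq> Q' \<and> Q' \<subseteq> Q \<longrightarrow> Q' = Q)"

definition goldie_hyp :: "('a,'b) ring_scheme \<Rightarrow> bool" where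
  "goldie_hyp A \<longleftrightarrow>
     (\<forall>I. ideal I A \<longrightarrow>
        (semiprime_ring (A Quot I) \<longrightarrow> left_goldie (A Quot I) \<or> right_goldie (A Quot I)) \<and>
        nilpotent_set (A Quot I) (prime_radical (A Quot I)))"

end

(* Let R be the subring H and I = P \<inter> H, and let N be the intersection of the primes
   of R containing I. Then R/N is semiprime, hence left or right Goldie. In a semiprime
   ring with ACC on left annihilators every left annihilator, in particular 0, is a finite
   intersection of primes: a left annihilator that is not prime is the intersection of two
   strictly larger ones. So N = Q\<^sub>1 \<inter> ... \<inter> Q\<^sub>n with primes Q\<^sub>i over I, and since the
   prime radical of R/I is nilpotent, N\<^sup>k \<subseteq> I. Thus every product of elements taken from
   Q\<^sub>1, ..., Q\<^sub>n, the list repeated k times, lies in I \<subseteq> P. If no Q\<^sub>i\<^sup>S were contained in P,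
   the primeness of P would produce, one factor at a time, an element of S times such a
   product outside P. Hence some Q\<^sub>i\<^sup>S \<subseteq> P, and by Zorn's lemma a prime of R minimal over I
   below Q\<^sub>i has the same property. *)

theory Submission
  imports Defs
begin

section \<open>Products of lists of subsets\<close>

(* All products u\<^sub>1 \<cdots> u\<^sub>n with u\<^sub>i \<in> U\<^sub>i; unlike the ideal product, no sums are taken. *)
definition set_prod :: "('a, 'b) monoid_scheme \<Rightarrow> 'a set list \<Rightarrow> 'a set" where
  "set_prod G Us = foldr (\<lambda>U V. U <#>\<^bsub>G\<^esub> V) Us {\<one>\<^bsub>G\<^esub>}"

lemma set_multI: "a \<in> A \<Longrightarrow> b \<in> B \<Longrightarrow> a \<otimes>\<^bsub>G\<^esub> b \<in> A <#>\<^bsub>G\<^esub> B"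
  unfolding set_mult_def by blast

lemma set_multE:
  assumes "x \<in> A <#>\<^bsub>G\<^esub> B"
  obtains a b where "a \<in> A" "b \<in> B" "x = a \<otimes>\<^bsub>G\<^esub> b"
  using assms unfolding set_mult_def by blast

lemma set_prod_Nil [simp]: "set_prod G [] = {\<one>\<^bsub>G\<^esub>}"
  by (simp add: set_prod_def)

lemma set_prod_Cons [simp]: "set_prod G (U # Us) = U <#>\<^bsub>G\<^esub> set_prod G Us"
  by (simp add: set_prod_def)

lemma set_prod_consistent [simp]: "set_prod (G\<lparr>carrier := H\<rparr>) Us = set_prod G Us"
  by (induction Us) simp_all

lemma set_prod_mono: "list_all2 (\<subseteq>) Us Vs \<Longrightarrow> set_prod G Us \<subseteq> set_prod G Vs"
  by (induction Us Vs rule: list_all2_induct) (simp_all add: mono_set_mult)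

lemma mem_set_prod_replicate:
  assumes "x \<in> set_prod G (replicate k N)"
  shows "\<exists>xs. length xs = k \<and> set xs \<subseteq> N \<and> x = foldr (\<lambda>x y. x \<otimes>\<^bsub>G\<^esub> y) xs \<one>\<^bsub>G\<^esub>"
  using assms
proof (induction k arbitrary: x)
  case 0
  then show ?case by simp
next
  case (Suc k)
  from Suc.prems obtain y z where "y \<in> N" "z \<in> set_prod G (replicate k N)" "x = y \<otimes>\<^bsub>G\<^esub> z"
    by (auto elim: set_multE)
  moreover from Suc.IH[OF \<open>z \<in> set_prod G (replicate k N)\<close>] obtain zs
    where "length zs = k" "set zs \<subseteq> N" "z = foldr (\<lambda>x y. x \<otimes>\<^bsub>G\<^esub> y) zs \<one>\<^bsub>G\<^esub>"
    by (elim exE conjE)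
  ultimately show ?case by (intro exI[of _ "y # zs"]) simp
qed

lemma nilpotent_set_set_prod_replicate:
  assumes "nilpotent_set A N"
  obtains k where "set_prod A (replicate k N) \<subseteq> {\<zero>\<^bsub>A\<^esub>}"
proof -
  from assms obtain k where k: "\<And>xs. length xs = k \<and> set xs \<subseteq> N \<Longrightarrow>
      foldr (\<lambda>x y. x \<otimes>\<^bsub>A\<^esub> y) xs \<one>\<^bsub>A\<^esub> = \<zero>\<^bsub>A\<^esub>"
    unfolding nilpotent_set_def by blast
  have "set_prod A (replicate k N) \<subseteq> {\<zero>\<^bsub>A\<^esub>}"
  proof
    fix x assume "x \<in> set_prod A (replicate k N)"
    with k show "x \<in> {\<zero>\<^bsub>A\<^esub>}" by (metis mem_set_prod_replicate singletonI)
  qed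
  then show ?thesis by (rule that)
qed

context monoid
begin

lemma set_mult_assoc_monoid:
  assumes "A \<subseteq> carrier G" "B \<subseteq> carrier G" "C \<subseteq> carrier G"
  shows "(A <#> B) <#> C = A <#> (B <#> C)"
proof (intro equalityI subsetI)
  fix x assume "x \<in> (A <#> B) <#> C"
  then obtain a b c where abc: "a \<in> A" "b \<in> B" "c \<in> C" and "x = (a \<otimes> b) \<otimes> c"
    by (metis set_multE)
  moreover have "a \<in> carrier G" "b \<in> carrier G" "c \<in> carrier G" using abc assms by auto
  ultimately have "x = a \<otimes> (b \<otimes> c)" by (simp add: m_assoc)
  with abc show "x \<in> A <#> (B <#> C)" by (simp add: set_multI)
next
  fix x assume "x \<in> A <#> (B <#> C)"
  then obtain a b c where abc: "a \<in> A" "b \<in> B" "c \<in> C" and "x = a \<otimes> (b \<otimes> c)"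
    by (metis set_multE)
  moreover have "a \<in> carrier G" "b \<in> carrier G" "c \<in> carrier G" using abc assms by auto
  ultimately have "x = (a \<otimes> b) \<otimes> c" by (simp add: m_assoc)
  with abc show "x \<in> (A <#> B) <#> C" by (simp add: set_multI)
qed

lemma one_set_mult: "A \<subseteq> carrier G \<Longrightarrow> {\<one>} <#> A = A"
  unfolding set_mult_def by (auto, metis l_one subsetD)

lemma set_prod_closed: "\<forall>U\<in>set Us. U \<subseteq> carrier G \<Longrightarrow> set_prod G Us \<subseteq> carrier G"
  by (induction Us) (simp_all add: set_mult_closed)

lemma set_prod_append:
  assumes Us: "\<forall>U\<in>set Us. U \<subseteq> carrier G" and Vs: "\<forall>V\<in>set Vs. V \<subseteq> carrier G"
  shows "set_prod G (Us @ Vs) = set_prod G Us <#> set_prod G Vs"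
  using Us
proof (induction Us)
  case Nil
  have "set_prod G Vs \<subseteq> carrier G" using Vs by (rule set_prod_closed)
  then show ?case by (simp add: one_set_mult)
next
  case (Cons U Us)
  have "U \<subseteq> carrier G" "set_prod G Us \<subseteq> carrier G" "set_prod G Vs \<subseteq> carrier G"
    using Cons.prems Vs by (simp_all add: set_prod_closed)
  then have "U <#> (set_prod G Us <#> set_prod G Vs) = (U <#> set_prod G Us) <#> set_prod G Vs"
    by (rule set_mult_assoc_monoid[symmetric])
  with Cons show ?case by simp
qed

lemma set_prod_concat:
  "\<forall>Us\<in>set Uss. \<forall>U\<in>set Us. U \<subseteq> carrier G \<Longrightarrow>
    set_prod G (concat Uss) = set_prod G (map (set_prod G) Uss)"
  by (induction Uss) (simp_all add: set_prod_append)

end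

context ring
begin

lemma image_set_prod:
  assumes h: "h \<in> ring_hom R A" and Us: "\<forall>U\<in>set Us. U \<subseteq> carrier R"
  shows "h ` set_prod R Us = set_prod A (map ((`) h) Us)"
  using Us
proof (induction Us)
  case Nil
  then show ?case using ring_hom_one[OF h] by simp
next
  case (Cons U Us)
  have "h \<in> hom R A" using h by (auto simp: ring_hom_def hom_def)
  moreover have "U \<subseteq> carrier R" "set_prod R Us \<subseteq> carrier R"
    using Cons.prems by (simp_all add: set_prod_closed)
  ultimately have "h ` (U <#> set_prod R Us) = h ` U <#>\<^bsub>A\<^esub> h ` set_prod R Us"
    by (rule set_mult_hom)
  with Cons show ?case by simp
qed

lemma set_prod_subset_ideal:
  assumes J: "ideal J R" and "J \<in> set Us" and "\<forall>U\<in>set Us. U \<subseteq> carrier R"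
  shows "set_prod R Us \<subseteq> J"
  using assms(2,3)
proof (induction Us)
  case Nil
  then show ?case by simp
next
  case (Cons U Us)
  have Uc: "U \<subseteq> carrier R" and Pc: "set_prod R Us \<subseteq> carrier R"
    using Cons.prems by (simp_all add: set_prod_closed)
  show ?case
  proof (cases "J \<in> set Us")
    case True
    with Cons have "set_prod R Us \<subseteq> J" by simp
    with Uc show ?thesis by (auto elim!: set_multE intro: ideal.I_l_closed[OF J])
  next
    case False
    with Cons.prems have "U = J" by simp
    with Pc show ?thesis by (auto elim!: set_multE intro: ideal.I_r_closed[OF J])
  qed
qed

end

section \<open>Annihilators in semiprime rings\<close>

(* Weaker than a left ideal (no additive closure), so that sets such as R b Y qualify. *)
definition left_mult_closed :: "('a, 'b) ring_scheme \<Rightarrow> 'a set \<Rightarrow> bool" where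
  "left_mult_closed A Y \<longleftrightarrow> Y \<subseteq> carrier A \<and> (\<forall>r\<in>carrier A. \<forall>y\<in>Y. r \<otimes>\<^bsub>A\<^esub> y \<in> Y)"

definition left_annihilators :: "('a, 'b) ring_scheme \<Rightarrow> 'a set set" where
  "left_annihilators A = {left_annihilator A Y | Y. left_mult_closed A Y}"

lemma left_annihilatorsI: "left_mult_closed A Y \<Longrightarrow> left_annihilator A Y \<in> left_annihilators A"
  unfolding left_annihilators_def by blast

context ring
begin

lemma left_annihilator_closed: "left_annihilator R Y \<subseteq> carrier R"
  by (auto simp: left_annihilator_def)

lemma left_annihilator_antimono: "Y \<subseteq> Z \<Longrightarrow> left_annihilator R Z \<subseteq> left_annihilator R Y"
  by (auto simp: left_annihilator_def)

lemma left_mult_closed_carrier: "left_mult_closed R (carrier R)"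
  by (simp add: left_mult_closed_def)

lemma ideal_imp_left_mult_closed: "ideal I R \<Longrightarrow> left_mult_closed R I"
  by (auto simp: left_mult_closed_def ideal.I_l_closed ideal.Icarr)

lemma left_mult_closed_set_mult:
  assumes U: "left_mult_closed R U" and Y: "Y \<subseteq> carrier R"
  shows "left_mult_closed R (U <#> Y)"
  unfolding left_mult_closed_def
proof (intro conjI ballI)
  have "U \<subseteq> carrier R" using U by (simp add: left_mult_closed_def)
  then show "U <#> Y \<subseteq> carrier R" using Y by (rule set_mult_closed)
  fix r z assume r: "r \<in> carrier R" and "z \<in> U <#> Y"
  then obtain x y where x: "x \<in> U" and y: "y \<in> Y" and z: "z = x \<otimes> y" by (elim set_multE)
  have "x \<in> carrier R" "y \<in> carrier R" using U Y x y by (auto simp: left_mult_closed_def)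
  then have "r \<otimes> z = (r \<otimes> x) \<otimes> y" using r z by (simp add: m_assoc)
  moreover have "r \<otimes> x \<in> U" using U r x by (simp add: left_mult_closed_def)
  ultimately show "r \<otimes> z \<in> U <#> Y" using y by (simp add: set_multI)
qed

lemma left_annihilator_subset_set_mult:
  assumes "left_mult_closed R Y" "U \<subseteq> carrier R"
  shows "left_annihilator R Y \<subseteq> left_annihilator R (U <#> Y)"
proof (rule left_annihilator_antimono, rule subsetI)
  fix z assume "z \<in> U <#> Y"
  with assms show "z \<in> Y" by (auto elim!: set_multE simp: left_mult_closed_def)
qed

lemma ideal_left_annihilator:
  assumes Y: "left_mult_closed R Y"
  shows "ideal (left_annihilator R Y) R"
proof (rule idealI)
  show "ring R" by (rule ring_axioms)
  show "subgroup (left_annihilator R Y) (add_monoid R)"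
    using Y by (intro add.subgroupI)
      (auto simp: left_annihilator_def left_mult_closed_def l_distr l_minus subset_iff)
next
  fix a x assume "a \<in> left_annihilator R Y" and "x \<in> carrier R"
  then show "x \<otimes> a \<in> left_annihilator R Y" and "a \<otimes> x \<in> left_annihilator R Y"
    using Y by (auto simp: left_annihilator_def left_mult_closed_def m_assoc subset_iff)
qed

lemma semiprime_ringD:
  assumes "semiprime_ring R" "a \<in> carrier R" "\<And>r. r \<in> carrier R \<Longrightarrow> a \<otimes> r \<otimes> a = \<zero>"
  shows "a = \<zero>"
  using assms by (auto simp: semiprime_ring_def)

lemma semiprime_mult_left_annihilator:
  assumes sp: "semiprime_ring R" and Y: "left_mult_closed R Y"
    and z: "z \<in> left_annihilator R Y" and x: "x \<in> Y"
  shows "x \<otimes> z = \<zero>"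
proof (rule semiprime_ringD[OF sp])
  have xc: "x \<in> carrier R" and zc: "z \<in> carrier R"
    using Y x z by (auto simp: left_mult_closed_def left_annihilator_def)
  then show "x \<otimes> z \<in> carrier R" by simp
  fix r assume r: "r \<in> carrier R"
  have "z \<otimes> (r \<otimes> x) = \<zero>"
    using Y z r x by (auto simp: left_mult_closed_def left_annihilator_def)
  have "x \<otimes> z \<otimes> r \<otimes> (x \<otimes> z) = x \<otimes> (z \<otimes> (r \<otimes> x)) \<otimes> z"
    using xc zc r by (simp add: m_assoc)
  also have "\<dots> = \<zero>" using \<open>z \<otimes> (r \<otimes> x) = \<zero>\<close> xc zc by simp
  finally show "x \<otimes> z \<otimes> r \<otimes> (x \<otimes> z) = \<zero>" .
qed

lemma semiprime_mult_right_annihilator: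
  assumes sp: "semiprime_ring R" and Y: "ideal Y R"
    and z: "z \<in> right_annihilator R Y" and x: "x \<in> Y"
  shows "z \<otimes> x = \<zero>"
proof (rule semiprime_ringD[OF sp])
  have xc: "x \<in> carrier R" and zc: "z \<in> carrier R"
    using Y x z by (auto simp: right_annihilator_def ideal.Icarr)
  then show "z \<otimes> x \<in> carrier R" by simp
  fix r assume r: "r \<in> carrier R"
  have "x \<otimes> r \<otimes> z = \<zero>"
    using Y z r x by (auto simp: right_annihilator_def ideal.I_r_closed)
  have "z \<otimes> x \<otimes> r \<otimes> (z \<otimes> x) = z \<otimes> (x \<otimes> r \<otimes> z) \<otimes> x"
    using xc zc r by (simp add: m_assoc)
  also have "\<dots> = \<zero>" using \<open>x \<otimes> r \<otimes> z = \<zero>\<close> xc zc by simp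
  finally show "z \<otimes> x \<otimes> r \<otimes> (z \<otimes> x) = \<zero>" .
qed

lemma semiprime_left_annihilator_eq_right_annihilator:
  assumes sp: "semiprime_ring R" and Y: "ideal Y R"
  shows "left_annihilator R Y = right_annihilator R Y"
proof (intro equalityI subsetI)
  fix z assume z: "z \<in> left_annihilator R Y"
  have "x \<otimes> z = \<zero>" if "x \<in> Y" for x
    by (rule semiprime_mult_left_annihilator[OF sp ideal_imp_left_mult_closed[OF Y] z that])
  with z show "z \<in> right_annihilator R Y"
    by (simp add: left_annihilator_def right_annihilator_def)
next
  fix z assume z: "z \<in> right_annihilator R Y"
  have "z \<otimes> x = \<zero>" if "x \<in> Y" for x
    by (rule semiprime_mult_right_annihilator[OF sp Y z that])
  with z show "z \<in> left_annihilator R Y"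
    by (simp add: left_annihilator_def right_annihilator_def)
qed

lemma semiprime_subset_double_left_annihilator:
  assumes "semiprime_ring R" "left_mult_closed R Y"
  shows "Y \<subseteq> left_annihilator R (left_annihilator R Y)"
proof
  fix y assume y: "y \<in> Y"
  then have "y \<in> carrier R" using assms(2) by (auto simp: left_mult_closed_def)
  with semiprime_mult_left_annihilator[OF assms _ y]
  show "y \<in> left_annihilator R (left_annihilator R Y)" by (simp add: left_annihilator_def)
qed

lemma semiprime_left_annihilator_is_right_annihilator:
  assumes sp: "semiprime_ring R" and Y: "left_mult_closed R Y"
  shows "left_annihilator R Y
    = right_annihilator R (left_annihilator R (left_annihilator R Y))"
proof -
  let ?L = "left_annihilator R"
  have LY: "left_mult_closed R (?L Y)"
    by (rule ideal_imp_left_mult_closed[OF ideal_left_annihilator[OF Y]])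
  have "?L Y = ?L (?L (?L Y))"
  proof
    show "?L Y \<subseteq> ?L (?L (?L Y))"
      by (rule semiprime_subset_double_left_annihilator[OF sp LY])
    show "?L (?L (?L Y)) \<subseteq> ?L Y"
      by (rule left_annihilator_antimono[OF semiprime_subset_double_left_annihilator[OF sp Y]])
  qed
  also have "\<dots> = right_annihilator R (?L (?L Y))"
    by (rule semiprime_left_annihilator_eq_right_annihilator[OF sp ideal_left_annihilator[OF LY]])
  finally show ?thesis .
qed

end

section \<open>Semiprime Goldie rings\<close>

definition finite_prime_inter :: "('a, 'b) ring_scheme \<Rightarrow> 'a set \<Rightarrow> bool" where
  "finite_prime_inter A D \<longleftrightarrow> (\<exists>F. finite F \<and> F \<subseteq> Spec A \<and> D = carrier A \<inter> \<Inter>F)"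

context ring
begin

lemma left_annihilator_sandwich:
  assumes Y: "Y \<subseteq> carrier R" and a: "a \<in> carrier R" and b: "b \<in> carrier R"
    and ab: "\<And>r. r \<in> carrier R \<Longrightarrow> a \<otimes> r \<otimes> b \<in> left_annihilator R Y"
  shows "a \<in> left_annihilator R ((carrier R <#> {b}) <#> Y)"
proof -
  have "a \<otimes> w = \<zero>" if "w \<in> (carrier R <#> {b}) <#> Y" for w
  proof -
    from that obtain s y where s: "s \<in> carrier R" and y: "y \<in> Y" and w: "w = s \<otimes> b \<otimes> y"
      by (auto elim!: set_multE)
    have "a \<otimes> s \<otimes> b \<otimes> y = \<zero>" using ab[OF s] y by (simp add: left_annihilator_def)
    moreover have "a \<otimes> w = a \<otimes> s \<otimes> b \<otimes> y" using w a s b y Y by (auto simp: m_assoc)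
    ultimately show ?thesis by simp
  qed
  with a show ?thesis by (simp add: left_annihilator_def)
qed

lemma semiprime_mem_left_annihilator_set_mult:
  assumes sp: "semiprime_ring R" and Y: "left_mult_closed R Y" and b: "b \<in> carrier R"
    and E: "E \<subseteq> left_annihilator R ((carrier R <#> {b}) <#> Y)"
  shows "b \<in> left_annihilator R (E <#> Y)"
proof -
  have "b \<otimes> w = \<zero>" if "w \<in> E <#> Y" for w
  proof -
    from that obtain e y where e: "e \<in> E" and y: "y \<in> Y" and w: "w = e \<otimes> y"
      by (elim set_multE)
    have eE: "e \<in> left_annihilator R ((carrier R <#> {b}) <#> Y)" using e E by blast
    then have ec: "e \<in> carrier R" by (simp add: left_annihilator_def)
    have yc: "y \<in> carrier R" and wY: "w \<in> Y" using Y ec y w by (auto simp: left_mult_closed_def)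
    show "b \<otimes> w = \<zero>"
    proof (rule semiprime_ringD[OF sp])
      show "b \<otimes> w \<in> carrier R" using b ec yc w by simp
      fix r assume r: "r \<in> carrier R"
      have "(y \<otimes> r) \<otimes> b \<otimes> w \<in> (carrier R <#> {b}) <#> Y"
        using r yc wY by (intro set_multI) simp_all
      with eE have "e \<otimes> ((y \<otimes> r) \<otimes> b \<otimes> w) = \<zero>" by (simp add: left_annihilator_def)
      moreover have "b \<otimes> w \<otimes> r \<otimes> (b \<otimes> w) = b \<otimes> (e \<otimes> ((y \<otimes> r) \<otimes> b \<otimes> w))"
        using b ec yc r w by (simp add: m_assoc)
      ultimately show "b \<otimes> w \<otimes> r \<otimes> (b \<otimes> w) = \<zero>" using b by simp
    qed
  qed
  with b show ?thesis by (simp add: left_annihilator_def)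
qed

lemma semiprime_inter_left_annihilator_set_mult:
  assumes sp: "semiprime_ring R" and E: "ideal E R" and Y: "Y \<subseteq> carrier R"
  shows "E \<inter> left_annihilator R (E <#> Y) \<subseteq> left_annihilator R Y"
proof
  fix z assume z: "z \<in> E \<inter> left_annihilator R (E <#> Y)"
  then have zc: "z \<in> carrier R" by (simp add: left_annihilator_def)
  have "z \<otimes> y = \<zero>" if y: "y \<in> Y" for y
  proof (rule semiprime_ringD[OF sp])
    have yc: "y \<in> carrier R" using y Y by auto
    then show "z \<otimes> y \<in> carrier R" using zc by simp
    fix r assume r: "r \<in> carrier R"
    have "y \<otimes> r \<otimes> z \<in> E" using E z r yc by (simp add: ideal.I_l_closed)
    then have "(y \<otimes> r \<otimes> z) \<otimes> y \<in> E <#> Y" using y by (rule set_multI)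
    with z have "z \<otimes> ((y \<otimes> r \<otimes> z) \<otimes> y) = \<zero>" by (simp add: left_annihilator_def)
    moreover have "z \<otimes> y \<otimes> r \<otimes> (z \<otimes> y) = z \<otimes> ((y \<otimes> r \<otimes> z) \<otimes> y)"
      using zc yc r by (simp add: m_assoc)
    ultimately show "z \<otimes> y \<otimes> r \<otimes> (z \<otimes> y) = \<zero>" by simp
  qed
  with zc show "z \<in> left_annihilator R Y" by (simp add: left_annihilator_def)
qed

(* If D = l(Y) is not prime because a R b \<subseteq> D, then D = E \<inter> E' with E = l(R b Y) \<ni> a
   and E' = l(E Y) \<ni> b. *)
lemma semiprime_left_annihilator_split:
  assumes sp: "semiprime_ring R" and Y: "left_mult_closed R Y"
    and a: "a \<in> carrier R" and b: "b \<in> carrier R"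
    and ab: "\<And>r. r \<in> carrier R \<Longrightarrow> a \<otimes> r \<otimes> b \<in> left_annihilator R Y"
  obtains E E' where "E \<in> left_annihilators R" "E' \<in> left_annihilators R"
    "left_annihilator R Y \<subseteq> E" "left_annihilator R Y \<subseteq> E'" "a \<in> E" "b \<in> E'"
    "E \<inter> E' \<subseteq> left_annihilator R Y"
proof -
  have Yc: "Y \<subseteq> carrier R" using Y by (simp add: left_mult_closed_def)
  have Rb: "left_mult_closed R (carrier R <#> {b})"
    using b by (intro left_mult_closed_set_mult left_mult_closed_carrier) simp
  then have Rbc: "carrier R <#> {b} \<subseteq> carrier R" by (simp add: left_mult_closed_def)
  from Rb Yc have RbY: "left_mult_closed R ((carrier R <#> {b}) <#> Y)"
    by (rule left_mult_closed_set_mult)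
  define E where "E = left_annihilator R ((carrier R <#> {b}) <#> Y)"
  have E: "ideal E R" unfolding E_def using RbY by (rule ideal_left_annihilator)
  have Ec: "E \<subseteq> carrier R" unfolding E_def by (rule left_annihilator_closed)
  have EY: "left_mult_closed R (E <#> Y)"
    using ideal_imp_left_mult_closed[OF E] Yc by (rule left_mult_closed_set_mult)
  show ?thesis
  proof (rule that)
    show "E \<in> left_annihilators R" unfolding E_def using RbY by (rule left_annihilatorsI)
    show "left_annihilator R (E <#> Y) \<in> left_annihilators R" using EY by (rule left_annihilatorsI)
    show "left_annihilator R Y \<subseteq> E"
      unfolding E_def using Y Rbc by (rule left_annihilator_subset_set_mult)
    show "left_annihilator R Y \<subseteq> left_annihilator R (E <#> Y)"
      using Y Ec by (rule left_annihilator_subset_set_mult)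
    show "a \<in> E" unfolding E_def using Yc a b ab by (rule left_annihilator_sandwich)
    show "b \<in> left_annihilator R (E <#> Y)"
      using sp Y b by (rule semiprime_mem_left_annihilator_set_mult) (simp add: E_def)
    show "E \<inter> left_annihilator R (E <#> Y) \<subseteq> left_annihilator R Y"
      using sp E Yc by (rule semiprime_inter_left_annihilator_set_mult)
  qed
qed

lemma semiprime_goldie_wf:
  assumes sp: "semiprime_ring R" and G: "left_goldie R \<or> right_goldie R"
  shows "wf {(E, D). D \<in> left_annihilators R \<and> E \<in> left_annihilators R \<and> D \<subset> E}"
  unfolding wf_iff_no_infinite_down_chain
proof
  assume "\<exists>f. \<forall>i. (f (Suc i), f i) \<in> {(E, D). D \<in> left_annihilators R \<and> E \<in> left_annihilators R \<and> D \<subset> E}"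
  then obtain f where "\<forall>i. f i \<in> left_annihilators R \<and> f i \<subset> f (Suc i)" by blast
  then have f: "\<And>i. f i \<in> left_annihilators R" "\<And>i. f i \<subset> f (Suc i)" by simp_all
  then have "\<forall>i. \<exists>Y. left_mult_closed R Y \<and> f i = left_annihilator R Y"
    unfolding left_annihilators_def by blast
  then obtain Y where Y: "\<And>i. left_mult_closed R (Y i)" "\<And>i. f i = left_annihilator R (Y i)"
    by metis
  have "\<exists>m. \<forall>n\<ge>m. f n = f m"
    using G
  proof
    assume "left_goldie R"
    moreover have "\<exists>Z\<subseteq>carrier R. f n = left_annihilator R Z" for n
      using Y by (auto simp: left_mult_closed_def)
    ultimately show ?thesis unfolding left_goldie_def using f(2) by (meson psubset_imp_subset)
  next
    assume "right_goldie R"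
    moreover have "\<exists>Z\<subseteq>carrier R. f n = right_annihilator R Z" for n
      using Y semiprime_left_annihilator_is_right_annihilator[OF sp] left_annihilator_closed by metis
    ultimately show ?thesis unfolding right_goldie_def using f(2) by (meson psubset_imp_subset)
  qed
  then obtain m where "f (Suc m) = f m" by (meson le_SucI order_refl)
  then show False using f(2)[of m] by simp
qed

lemma semiprime_goldie_left_annihilator_finite_prime_inter:
  assumes sp: "semiprime_ring R" and G: "left_goldie R \<or> right_goldie R"
    and D: "D \<in> left_annihilators R"
  shows "finite_prime_inter R D"
  using D
proof (induction D rule: wf_induct_rule[OF semiprime_goldie_wf[OF sp G]])
  case (1 D)
  then obtain Y where Y: "left_mult_closed R Y" and D: "D = left_annihilator R Y"
    by (auto simp: left_annihilators_def)
  have IH: "finite_prime_inter R E" if "E \<in> left_annihilators R" "D \<subset> E" for E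
    using 1 that by blast
  have Did: "ideal D R" unfolding D using Y by (rule ideal_left_annihilator)
  have Dc: "D \<subseteq> carrier R" unfolding D by (rule left_annihilator_closed)
  consider "D = carrier R" | "prime_ideal_nc R D"
    | a b where "a \<in> carrier R" "b \<in> carrier R" "\<And>r. r \<in> carrier R \<Longrightarrow> a \<otimes> r \<otimes> b \<in> D"
        "a \<notin> D" "b \<notin> D"
    using Did unfolding prime_ideal_nc_def by blast
  then show ?case
  proof cases
    case 1
    then show ?thesis unfolding finite_prime_inter_def by (intro exI[of _ "{}"]) simp
  next
    case 2
    then show ?thesis unfolding finite_prime_inter_def using Dc
      by (intro exI[of _ "{D}"]) (auto simp: Spec_def)
  next
    case (3 a b)
    then obtain E E' where EE': "E \<in> left_annihilators R" "E' \<in> left_annihilators R"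
      "D \<subseteq> E" "D \<subseteq> E'" "a \<in> E" "b \<in> E'" "E \<inter> E' \<subseteq> D"
      using semiprime_left_annihilator_split[OF sp Y, of a b] unfolding D by blast
    obtain F where F: "finite F" "F \<subseteq> Spec R" "E = carrier R \<inter> \<Inter>F"
      using IH[of E] EE' 3 unfolding finite_prime_inter_def by blast
    obtain F' where F': "finite F'" "F' \<subseteq> Spec R" "E' = carrier R \<inter> \<Inter>F'"
      using IH[of E'] EE' 3 unfolding finite_prime_inter_def by blast
    have "D = carrier R \<inter> \<Inter>(F \<union> F')" using EE' F F' by auto
    with F F' show ?thesis unfolding finite_prime_inter_def by (intro exI[of _ "F \<union> F'"]) auto
  qed
qed

lemma semiprime_goldie_zero_finite_prime_inter:
  assumes "semiprime_ring R" "left_goldie R \<or> right_goldie R"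
  shows "finite_prime_inter R {\<zero>}"
proof -
  have "left_annihilator R (carrier R) = {\<zero>}"
    by (auto simp: left_annihilator_def) (metis one_closed r_one)
  moreover have "left_annihilator R (carrier R) \<in> left_annihilators R"
    using left_mult_closed_carrier by (rule left_annihilatorsI)
  ultimately show ?thesis
    using semiprime_goldie_left_annihilator_finite_prime_inter[OF assms] by simp
qed

end

section \<open>Prime ideals and factor rings\<close>

lemma prime_ideal_nc_vimage:
  assumes A: "ring A" and B: "ring B" and h: "h \<in> ring_hom A B"
    and surj: "h ` carrier A = carrier B" and P: "prime_ideal_nc B P"
  shows "prime_ideal_nc A {x \<in> carrier A. h x \<in> P}"
proof -
  interpret A: ring A by (rule A)
  interpret B: ring B by (rule B)
  have Pid: "ideal P B" and Pne: "P \<noteq> carrier B"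
    and Ppr: "\<And>a b. a \<in> carrier B \<Longrightarrow> b \<in> carrier B \<Longrightarrow>
        (\<forall>r\<in>carrier B. a \<otimes>\<^bsub>B\<^esub> r \<otimes>\<^bsub>B\<^esub> b \<in> P) \<Longrightarrow> a \<in> P \<or> b \<in> P"
    using P unfolding prime_ideal_nc_def by auto
  have "ideal {x \<in> carrier A. h x \<in> P} A"
    using ring_hom_ringI2[OF A B h] Pid by (rule ring_hom_ring.ideal_vimage)
  moreover have "\<one>\<^bsub>A\<^esub> \<notin> {x \<in> carrier A. h x \<in> P}"
    using ring_hom_one[OF h] Pne ideal.one_imp_carrier[OF Pid] by auto
  then have "{x \<in> carrier A. h x \<in> P} \<noteq> carrier A" by auto
  moreover have "a \<in> {x \<in> carrier A. h x \<in> P} \<or> b \<in> {x \<in> carrier A. h x \<in> P}"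
    if a: "a \<in> carrier A" and b: "b \<in> carrier A"
      and ab: "\<forall>r\<in>carrier A. a \<otimes>\<^bsub>A\<^esub> r \<otimes>\<^bsub>A\<^esub> b \<in> {x \<in> carrier A. h x \<in> P}" for a b
  proof -
    have "h a \<otimes>\<^bsub>B\<^esub> \<rho> \<otimes>\<^bsub>B\<^esub> h b \<in> P" if "\<rho> \<in> carrier B" for \<rho>
    proof -
      from that surj obtain r where r: "r \<in> carrier A" "\<rho> = h r" by auto
      then have "h a \<otimes>\<^bsub>B\<^esub> \<rho> \<otimes>\<^bsub>B\<^esub> h b = h (a \<otimes>\<^bsub>A\<^esub> r \<otimes>\<^bsub>A\<^esub> b)"
        using h a b by (simp add: ring_hom_mult)
      with ab r show ?thesis by simp
    qed
    moreover have "h a \<in> carrier B" "h b \<in> carrier B" using h a b by (simp_all add: ring_hom_closed)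
    ultimately have "h a \<in> P \<or> h b \<in> P" using Ppr by blast
    then show ?thesis using a b by auto
  qed
  ultimately show ?thesis unfolding prime_ideal_nc_def by blast
qed

context ring
begin

lemma Spec_subset_carrier: "Q \<in> Spec R \<Longrightarrow> Q \<subseteq> carrier R"
  unfolding Spec_def prime_ideal_nc_def using ideal.Icarr[of Q R] by blast

lemma ideal_inter_subring:
  assumes H: "subring H R" and P: "ideal P R"
  shows "ideal (P \<inter> H) (R\<lparr>carrier := H\<rparr>)"
proof -
  have "id \<in> ring_hom (R\<lparr>carrier := H\<rparr>) R"
    using subringE(1)[OF H] by (auto intro!: ring_hom_memI)
  then have "ring_hom_ring (R\<lparr>carrier := H\<rparr>) R id"
    using subring_is_ring[OF H] ring_axioms by (intro ring_hom_ringI2)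
  then have "ideal {x \<in> carrier (R\<lparr>carrier := H\<rparr>). id x \<in> P} (R\<lparr>carrier := H\<rparr>)"
    using P by (rule ring_hom_ring.ideal_vimage)
  moreover have "{x \<in> carrier (R\<lparr>carrier := H\<rparr>). id x \<in> P} = P \<inter> H" by auto
  ultimately show ?thesis by simp
qed

lemma carrier_FactRing: "carrier (R Quot I) = (+>) I ` carrier R"
  unfolding FactRing_def using A_RCOSETS_def'[of R I] by auto

lemma zero_FactRing: "\<zero>\<^bsub>R Quot I\<^esub> = I"
  by (simp add: FactRing_def)

lemma rcos_eq_ideal_iff:
  assumes "ideal I R" "a \<in> carrier R"
  shows "I +> a = I \<longleftrightarrow> a \<in> I"
  using a_rcos_zero[OF assms(1)] ideal.rcos_const_imp_mem[OF assms] by blast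

lemma prime_ideal_nc_FactRing_vimage:
  assumes I: "ideal I R" and P: "prime_ideal_nc (R Quot I) P"
  shows "prime_ideal_nc R {x \<in> carrier R. I +> x \<in> P}" and "I \<subseteq> {x \<in> carrier R. I +> x \<in> P}"
proof -
  show "prime_ideal_nc R {x \<in> carrier R. I +> x \<in> P}"
    using ring_axioms ideal.quotient_is_ring[OF I] ideal.rcos_ring_hom[OF I]
      carrier_FactRing[symmetric] P
    by (rule prime_ideal_nc_vimage)
  have "\<zero>\<^bsub>R Quot I\<^esub> \<in> P"
    using P by (simp add: prime_ideal_nc_def additive_subgroup.zero_closed ideal.axioms(1))
  then show "I \<subseteq> {x \<in> carrier R. I +> x \<in> P}"
    using I by (auto simp: a_rcos_zero ideal.Icarr zero_FactRing)
qed

lemma semiprime_ring_FactRing: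
  assumes N: "ideal N R"
    and semi: "\<And>a. a \<in> carrier R \<Longrightarrow> (\<And>r. r \<in> carrier R \<Longrightarrow> a \<otimes> r \<otimes> a \<in> N) \<Longrightarrow> a \<in> N"
  shows "semiprime_ring (R Quot N)"
  unfolding semiprime_ring_def
proof (intro ballI impI)
  have h: "(+>) N \<in> ring_hom R (R Quot N)" using N by (rule ideal.rcos_ring_hom)
  fix A assume "A \<in> carrier (R Quot N)"
    and A0: "\<forall>\<rho>\<in>carrier (R Quot N). A \<otimes>\<^bsub>R Quot N\<^esub> \<rho> \<otimes>\<^bsub>R Quot N\<^esub> A = \<zero>\<^bsub>R Quot N\<^esub>"
  then obtain a where a: "a \<in> carrier R" "A = N +> a" by (auto simp: carrier_FactRing)
  have "a \<in> N"
  proof (rule semi[OF a(1)])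
    fix r assume r: "r \<in> carrier R"
    have "N +> (a \<otimes> r \<otimes> a) = A \<otimes>\<^bsub>R Quot N\<^esub> (N +> r) \<otimes>\<^bsub>R Quot N\<^esub> A"
      using a r by (simp add: ring_hom_mult[OF h])
    also have "\<dots> = \<zero>\<^bsub>R Quot N\<^esub>" using A0 r by (simp add: carrier_FactRing)
    also have "\<dots> = N" by (simp add: zero_FactRing)
    finally show "a \<otimes> r \<otimes> a \<in> N" using a r N by (simp add: rcos_eq_ideal_iff)
  qed
  then show "A = \<zero>\<^bsub>R Quot N\<^esub>" using a N by (simp add: a_rcos_zero zero_FactRing)
qed

lemma finite_prime_inter_of_FactRing:
  assumes N: "ideal N R" and F: "finite_prime_inter (R Quot N) {\<zero>\<^bsub>R Quot N\<^esub>}"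
  shows "finite_prime_inter R N"
proof -
  from F obtain F where F: "finite F" "F \<subseteq> Spec (R Quot N)" "{N} = carrier (R Quot N) \<inter> \<Inter>F"
    unfolding finite_prime_inter_def by (auto simp: zero_FactRing)
  define pb where "pb P = {x \<in> carrier R. N +> x \<in> P}" for P
  have "pb ` F \<subseteq> Spec R"
    using F(2) prime_ideal_nc_FactRing_vimage(1)[OF N] unfolding pb_def Spec_def by auto
  moreover have "N = carrier R \<inter> \<Inter>(pb ` F)"
  proof (intro equalityI subsetI)
    fix x assume x: "x \<in> N"
    then have "N +> x = N" using N by (simp add: a_rcos_zero)
    then show "x \<in> carrier R \<inter> \<Inter>(pb ` F)"
      using x F(3) ideal.Icarr[OF N x] unfolding pb_def by auto
  next
    fix x assume x: "x \<in> carrier R \<inter> \<Inter>(pb ` F)"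
    then have "N +> x \<in> carrier (R Quot N) \<inter> \<Inter>F" unfolding pb_def by (auto simp: carrier_FactRing)
    then have "N +> x = N" using F(3) by blast
    then show "x \<in> N" using N x by (simp add: rcos_eq_ideal_iff)
  qed
  ultimately show ?thesis
    unfolding finite_prime_inter_def using F(1) by (intro exI[of _ "pb ` F"]) simp
qed

lemma prime_ideal_nc_Inter_chain:
  assumes ne: "C \<noteq> {}" and C: "C \<subseteq> Spec R"
    and chain: "\<And>P Q. P \<in> C \<Longrightarrow> Q \<in> C \<Longrightarrow> P \<subseteq> Q \<or> Q \<subseteq> P"
  shows "prime_ideal_nc R (\<Inter>C)"
proof -
  have Cp: "\<And>P. P \<in> C \<Longrightarrow> prime_ideal_nc R P" using C by (auto simp: Spec_def)
  have "ideal (\<Inter>C) R" using Cp ne by (intro i_Intersect) (auto simp: prime_ideal_nc_def)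
  moreover have "\<Inter>C \<noteq> carrier R"
  proof -
    obtain P where P: "P \<in> C" using ne by blast
    then have "ideal P R" "P \<noteq> carrier R" using Cp[OF P] by (simp_all add: prime_ideal_nc_def)
    then have "P \<subset> carrier R" using ideal.Icarr[of P R] by auto
    moreover have "\<Inter>C \<subseteq> P" using P by blast
    ultimately show ?thesis by blast
  qed
  moreover have "a \<in> \<Inter>C \<or> b \<in> \<Inter>C"
    if a: "a \<in> carrier R" and b: "b \<in> carrier R" and ab: "\<forall>r\<in>carrier R. a \<otimes> r \<otimes> b \<in> \<Inter>C" for a b
  proof (rule ccontr)
    assume "\<not> (a \<in> \<Inter>C \<or> b \<in> \<Inter>C)"
    then obtain P P' where "P \<in> C" "a \<notin> P" "P' \<in> C" "b \<notin> P'" by blast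
    then obtain Q where Q: "Q \<in> C" "a \<notin> Q" "b \<notin> Q" using chain by blast
    have "\<forall>r\<in>carrier R. a \<otimes> r \<otimes> b \<in> Q" using ab Q(1) by blast
    then have "a \<in> Q \<or> b \<in> Q" using Cp[OF Q(1)] a b unfolding prime_ideal_nc_def by blast
    with Q show False by blast
  qed
  ultimately show ?thesis unfolding prime_ideal_nc_def by blast
qed

lemma exists_minimal_prime_over_subset:
  assumes Q: "Q \<in> Spec R" and IQ: "I \<subseteq> Q"
  obtains M where "minimal_prime_over R I M" "M \<subseteq> Q"
proof -
  define Fam where "Fam = {Q' \<in> Spec R. I \<subseteq> Q' \<and> Q' \<subseteq> Q}"
  have po: "partial_order_on Fam (relation_of (\<lambda>A B. B \<subseteq> A) Fam)"
    by (rule partial_order_on_relation_ofI) auto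
  have "\<exists>U\<in>Fam. \<forall>A\<in>C. U \<subseteq> A" if C: "C \<in> Chains (relation_of (\<lambda>A B. B \<subseteq> A) Fam)" for C
  proof (cases "C = {}")
    case True
    then show ?thesis using Q IQ unfolding Fam_def by auto
  next
    case False
    have CF: "C \<subseteq> Fam" by (rule Chains_relation_of[OF C])
    have "\<And>A B. A \<in> C \<Longrightarrow> B \<in> C \<Longrightarrow> A \<subseteq> B \<or> B \<subseteq> A"
      using C unfolding Chains_def relation_of_def by blast
    then have "prime_ideal_nc R (\<Inter>C)"
      using False CF by (intro prime_ideal_nc_Inter_chain) (auto simp: Fam_def)
    then have "\<Inter>C \<in> Fam" using CF False unfolding Fam_def Spec_def by blast
    then show ?thesis by blast
  qed
  then obtain M where M: "M \<in> Fam" and Mmin: "\<forall>A\<in>Fam. A \<subseteq> M \<longrightarrow> A = M"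
    using predicate_Zorn[OF po] by blast
  have "minimal_prime_over R I M"
    using M Mmin unfolding minimal_prime_over_def Fam_def by blast
  with M show ?thesis unfolding Fam_def by (blast intro: that)
qed

end

section \<open>The prime radical over an ideal\<close>

definition prime_radical_over :: "('a, 'b) ring_scheme \<Rightarrow> 'a set \<Rightarrow> 'a set" where
  "prime_radical_over A I = carrier A \<inter> \<Inter>{Q \<in> Spec A. I \<subseteq> Q}"

context ring
begin

lemma ideal_prime_radical_over: "ideal (prime_radical_over R I) R"
proof -
  have "ideal (\<Inter>(insert (carrier R) {Q \<in> Spec R. I \<subseteq> Q})) R"
    by (rule i_Intersect) (auto simp: oneideal Spec_def prime_ideal_nc_def)
  moreover have "prime_radical_over R I = \<Inter>(insert (carrier R) {Q \<in> Spec R. I \<subseteq> Q})"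
    by (simp add: prime_radical_over_def)
  ultimately show ?thesis by simp
qed

lemma semiprime_ring_FactRing_prime_radical_over:
  "semiprime_ring (R Quot prime_radical_over R I)"
proof (rule semiprime_ring_FactRing[OF ideal_prime_radical_over])
  fix a assume a: "a \<in> carrier R"
    and ara: "\<And>r. r \<in> carrier R \<Longrightarrow> a \<otimes> r \<otimes> a \<in> prime_radical_over R I"
  have "a \<in> Q" if Q: "Q \<in> Spec R" "I \<subseteq> Q" for Q
  proof -
    have "a \<otimes> r \<otimes> a \<in> Q" if "r \<in> carrier R" for r
      using ara[OF that] Q unfolding prime_radical_over_def by blast
    with Q(1) a show ?thesis unfolding Spec_def prime_ideal_nc_def by blast
  qed
  then show "a \<in> prime_radical_over R I" using a unfolding prime_radical_over_def by blast
qed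

lemma set_prod_replicate_prime_radical_over_subset:
  assumes I: "ideal I R" and nil: "nilpotent_set (R Quot I) (prime_radical (R Quot I))"
  obtains k where "set_prod R (replicate k (prime_radical_over R I)) \<subseteq> I"
proof -
  let ?N = "prime_radical_over R I"
  have Nc: "?N \<subseteq> carrier R" by (simp add: prime_radical_over_def)
  have hN: "(+>) I ` ?N \<subseteq> prime_radical (R Quot I)"
  proof (rule image_subsetI)
    fix x assume x: "x \<in> ?N"
    have "I +> x \<in> P" if "P \<in> Spec (R Quot I)" for P
    proof -
      have "{y \<in> carrier R. I +> y \<in> P} \<in> Spec R" "I \<subseteq> {y \<in> carrier R. I +> y \<in> P}"
        using prime_ideal_nc_FactRing_vimage[OF I] that unfolding Spec_def by auto
      then show ?thesis using x unfolding prime_radical_over_def by blast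
    qed
    moreover have "I +> x \<in> carrier (R Quot I)" using x Nc by (auto simp: carrier_FactRing)
    ultimately show "I +> x \<in> prime_radical (R Quot I)" unfolding prime_radical_def by blast
  qed
  obtain k
    where k: "set_prod (R Quot I) (replicate k (prime_radical (R Quot I))) \<subseteq> {\<zero>\<^bsub>R Quot I\<^esub>}"
    using nil by (rule nilpotent_set_set_prod_replicate)
  have "(+>) I ` set_prod R (replicate k ?N) = set_prod (R Quot I) (replicate k ((+>) I ` ?N))"
    using image_set_prod[OF ideal.rcos_ring_hom[OF I], of "replicate k ?N"] Nc by simp
  also have "\<dots> \<subseteq> set_prod (R Quot I) (replicate k (prime_radical (R Quot I)))"
    using hN by (intro set_prod_mono) (simp add: list_all2_conv_all_nth)
  also have "\<dots> \<subseteq> {I}" using k by (simp add: zero_FactRing)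
  finally have image: "(+>) I ` set_prod R (replicate k ?N) \<subseteq> {I}" .
  have "set_prod R (replicate k ?N) \<subseteq> I"
  proof
    fix x assume x: "x \<in> set_prod R (replicate k ?N)"
    then have "x \<in> carrier R" using set_prod_closed[of "replicate k ?N"] Nc by auto
    moreover have "I +> x = I" using image x by blast
    ultimately show "x \<in> I" using I by (simp add: rcos_eq_ideal_iff)
  qed
  then show ?thesis by (rule that)
qed

lemma finite_prime_inter_prime_radical_over:
  assumes "goldie_hyp R"
  shows "finite_prime_inter R (prime_radical_over R I)"
proof -
  let ?N = "prime_radical_over R I"
  have N: "ideal ?N R" by (rule ideal_prime_radical_over)
  have sp: "semiprime_ring (R Quot ?N)" by (rule semiprime_ring_FactRing_prime_radical_over)
  with assms N have "left_goldie (R Quot ?N) \<or> right_goldie (R Quot ?N)"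
    unfolding goldie_hyp_def by blast
  with ideal.quotient_is_ring[OF N] sp have "finite_prime_inter (R Quot ?N) {\<zero>\<^bsub>R Quot ?N\<^esub>}"
    by (rule ring.semiprime_goldie_zero_finite_prime_inter)
  then show ?thesis by (rule finite_prime_inter_of_FactRing[OF N])
qed

lemma goldie_hyp_prime_product_subset:
  assumes G: "goldie_hyp R" and I: "ideal I R"
  obtains Qs where "\<forall>Q\<in>set Qs. Q \<in> Spec R \<and> I \<subseteq> Q" "set_prod R Qs \<subseteq> I"
proof -
  define N where "N = prime_radical_over R I"
  have IN: "I \<subseteq> N" unfolding N_def prime_radical_over_def using ideal.Icarr[OF I] by blast
  obtain F where F: "finite F" "F \<subseteq> Spec R" "N = carrier R \<inter> \<Inter>F"
    using finite_prime_inter_prime_radical_over[OF G, of I]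
    unfolding N_def finite_prime_inter_def by blast
  obtain Ls where Ls: "set Ls = F" using finite_list[OF F(1)] by blast
  have Fid: "ideal Q R" if "Q \<in> F" for Q
    using F(2) that unfolding Spec_def prime_ideal_nc_def by blast
  have Lc: "\<forall>Q\<in>set Ls. Q \<subseteq> carrier R" using F(2) Ls Spec_subset_carrier by blast
  have "set_prod R Ls \<subseteq> Q" if "Q \<in> F" for Q
    using set_prod_subset_ideal[OF Fid[OF that] _ Lc] that Ls by simp
  then have "set_prod R Ls \<subseteq> N" using F(3) set_prod_closed[OF Lc] by blast
  obtain k where k: "set_prod R (replicate k N) \<subseteq> I"
    using set_prod_replicate_prime_radical_over_subset[OF I] G I
    unfolding goldie_hyp_def N_def by blast
  define Qs where "Qs = concat (replicate k Ls)"
  have "set_prod R Qs = set_prod R (replicate k (set_prod R Ls))"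
    unfolding Qs_def using Lc by (simp add: set_prod_concat)
  also have "\<dots> \<subseteq> set_prod R (replicate k N)"
    using \<open>set_prod R Ls \<subseteq> N\<close> by (intro set_prod_mono) (simp add: list_all2_conv_all_nth)
  finally have "set_prod R Qs \<subseteq> I" using k by blast
  moreover have "\<forall>Q\<in>set Qs. Q \<in> Spec R \<and> I \<subseteq> Q"
    unfolding Qs_def using Ls F IN by auto
  ultimately show ?thesis using that by blast
qed

end

section \<open>The left ideal generated by a set and the extended ideal\<close>

lemma left_gen_mono: "Y \<subseteq> Z \<Longrightarrow> left_gen A Y \<subseteq> left_gen A Z"
  unfolding left_gen_def by blast

lemma ext_ideal_mono: "Q \<subseteq> Q' \<Longrightarrow> ext_ideal A Q \<subseteq> ext_ideal A Q'"
  unfolding ext_ideal_def using left_gen_mono by blast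

context ring
begin

lemma zero_in_left_gen: "\<zero> \<in> left_gen R Y"
  unfolding left_gen_def mem_Collect_eq
  by (rule exI[of _ "0::nat"], rule exI[of _ "\<lambda>_. \<one>"], rule exI[of _ "\<lambda>_. \<one>"]) simp

lemma left_gen_add_mult:
  assumes Y: "Y \<subseteq> carrier R" and u: "u \<in> left_gen R Y" and t: "t \<in> carrier R" and y: "y \<in> Y"
  shows "t \<otimes> y \<oplus> u \<in> left_gen R Y"
proof -
  obtain n :: nat and s q where u: "u = finsum R (\<lambda>i. s i \<otimes> q i) {..<n}"
    and sq: "\<forall>i<n. s i \<in> carrier R \<and> q i \<in> Y"
    using u unfolding left_gen_def by blast
  define s' where "s' = s(n := t)"
  define q' where "q' = q(n := y)"
  have sq': "\<forall>i<Suc n. s' i \<in> carrier R \<and> q' i \<in> Y"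
    using sq t y by (auto simp: s'_def q'_def less_Suc_eq)
  then have "(\<lambda>i. s' i \<otimes> q' i) \<in> {..<Suc n} \<rightarrow> carrier R" using Y by auto
  then have "finsum R (\<lambda>i. s' i \<otimes> q' i) {..<Suc n}
      = s' n \<otimes> q' n \<oplus> finsum R (\<lambda>i. s' i \<otimes> q' i) {..<n}"
    unfolding lessThan_Suc by (intro finsum_insert) auto
  also have "finsum R (\<lambda>i. s' i \<otimes> q' i) {..<n} = u"
    unfolding u using sq Y by (intro finsum_cong') (auto simp: s'_def q'_def)
  finally have "finsum R (\<lambda>i. s' i \<otimes> q' i) {..<Suc n} = t \<otimes> y \<oplus> u"
    by (simp add: s'_def q'_def)
  with sq' show ?thesis
    unfolding left_gen_def mem_Collect_eq by (intro exI[of _ "Suc n"] exI[of _ s'] exI[of _ q']) simp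
qed

lemma left_gen_subsetI:
  assumes Y: "Y \<subseteq> carrier R" and M0: "\<zero> \<in> M"
    and M: "\<And>t y u. t \<in> carrier R \<Longrightarrow> y \<in> Y \<Longrightarrow> u \<in> M \<Longrightarrow> u \<in> carrier R \<Longrightarrow> t \<otimes> y \<oplus> u \<in> M"
  shows "left_gen R Y \<subseteq> M"
proof
  fix u assume "u \<in> left_gen R Y"
  then obtain n :: nat and s q where u: "u = finsum R (\<lambda>i. s i \<otimes> q i) {..<n}"
    and sq: "\<forall>i<n. s i \<in> carrier R \<and> q i \<in> Y"
    unfolding left_gen_def by blast
  have "finsum R (\<lambda>i. s i \<otimes> q i) {..<m} \<in> M" if "m \<le> n" for m
    using that
  proof (induction m)
    case 0
    then show ?case using M0 by simp
  next
    case (Suc m)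
    have sm: "s m \<in> carrier R" "q m \<in> Y" using Suc.prems sq by auto
    have "s i \<otimes> q i \<in> carrier R" if "i < m" for i
      using that Suc.prems sq Y by (auto simp: subset_iff)
    then have f: "(\<lambda>i. s i \<otimes> q i) \<in> {..<m} \<rightarrow> carrier R" by simp
    have "finsum R (\<lambda>i. s i \<otimes> q i) {..<Suc m} = s m \<otimes> q m \<oplus> finsum R (\<lambda>i. s i \<otimes> q i) {..<m}"
      unfolding lessThan_Suc using f sm Y by (intro finsum_insert) auto
    moreover have "finsum R (\<lambda>i. s i \<otimes> q i) {..<m} \<in> carrier R" using f by simp
    moreover have "finsum R (\<lambda>i. s i \<otimes> q i) {..<m} \<in> M" using Suc by simp
    ultimately show ?case using sm by (simp add: M)
  qed
  then show "u \<in> M" using u by simp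
qed

lemma left_gen_closed: "Y \<subseteq> carrier R \<Longrightarrow> left_gen R Y \<subseteq> carrier R"
  by (rule left_gen_subsetI) auto

lemma subset_left_gen: "Y \<subseteq> carrier R \<Longrightarrow> Y \<subseteq> left_gen R Y"
  using left_gen_add_mult[OF _ zero_in_left_gen one_closed] by (metis l_one r_zero subsetD subsetI)

lemma left_gen_add:
  assumes Y: "Y \<subseteq> carrier R" and u: "u \<in> left_gen R Y" and v: "v \<in> left_gen R Y"
  shows "u \<oplus> v \<in> left_gen R Y"
proof -
  have "left_gen R Y \<subseteq> {u \<in> carrier R. \<forall>v\<in>left_gen R Y. u \<oplus> v \<in> left_gen R Y}"
  proof (rule left_gen_subsetI[OF Y])
    show "\<zero> \<in> {u \<in> carrier R. \<forall>v\<in>left_gen R Y. u \<oplus> v \<in> left_gen R Y}"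
      using left_gen_closed[OF Y] by auto
    fix t y u assume t: "t \<in> carrier R" and y: "y \<in> Y"
      and u: "u \<in> {u \<in> carrier R. \<forall>v\<in>left_gen R Y. u \<oplus> v \<in> left_gen R Y}"
    have yc: "y \<in> carrier R" using y Y by auto
    have "t \<otimes> y \<oplus> u \<oplus> v \<in> left_gen R Y" if v: "v \<in> left_gen R Y" for v
    proof -
      have "t \<otimes> y \<oplus> u \<oplus> v = t \<otimes> y \<oplus> (u \<oplus> v)"
        using t yc u v left_gen_closed[OF Y] by (auto simp: a_assoc)
      then show ?thesis using left_gen_add_mult[OF Y _ t y] u v by simp
    qed
    then show "t \<otimes> y \<oplus> u \<in> {u \<in> carrier R. \<forall>v\<in>left_gen R Y. u \<oplus> v \<in> left_gen R Y}"
      using t yc u by auto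
  qed
  then show ?thesis using u v by auto
qed

lemma left_gen_subset_ideal:
  assumes J: "ideal J R" and YJ: "Y \<subseteq> J"
  shows "left_gen R Y \<subseteq> J"
proof (rule left_gen_subsetI)
  show "Y \<subseteq> carrier R" using YJ ideal.Icarr[OF J] by blast
  show "\<zero> \<in> J" using J by (simp add: additive_subgroup.zero_closed ideal.axioms(1))
  fix t y u assume "t \<in> carrier R" "y \<in> Y" "u \<in> J"
  then show "t \<otimes> y \<oplus> u \<in> J"
    using YJ by (auto intro: ideal.I_l_closed[OF J] additive_subgroup.a_closed[OF ideal.axioms(1)[OF J]])
qed

lemma left_gen_mult_right:
  assumes Q: "Q \<subseteq> carrier R" and Y: "Y \<subseteq> carrier R" and w: "w \<in> left_gen R Q" and y: "y \<in> Y"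
  shows "w \<otimes> y \<in> left_gen R (Q <#> Y)"
proof -
  obtain n :: nat and s q where w: "w = finsum R (\<lambda>i. s i \<otimes> q i) {..<n}"
    and sq: "\<forall>i<n. s i \<in> carrier R \<and> q i \<in> Q"
    using w unfolding left_gen_def by blast
  have yc: "y \<in> carrier R" using y Y by auto
  have "w \<otimes> y = finsum R (\<lambda>i. s i \<otimes> q i \<otimes> y) {..<n}"
    unfolding w using sq Q yc by (intro finsum_ldistr) auto
  also have "\<dots> = finsum R (\<lambda>i. s i \<otimes> (q i \<otimes> y)) {..<n}"
    using sq Q yc by (intro finsum_cong') (auto simp: m_assoc)
  finally have "w \<otimes> y = finsum R (\<lambda>i. s i \<otimes> (q i \<otimes> y)) {..<n}" .
  moreover have "\<forall>i<n. s i \<in> carrier R \<and> q i \<otimes> y \<in> Q <#> Y" using sq y by (auto intro: set_multI)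
  ultimately show ?thesis
    unfolding left_gen_def mem_Collect_eq by (intro exI[of _ n] exI[of _ s] exI[of _ "\<lambda>i. q i \<otimes> y"]) simp
qed

lemma ext_ideal_mult_left_gen:
  assumes Q: "Q \<subseteq> carrier R" and Y: "Y \<subseteq> carrier R" and x: "x \<in> ext_ideal R Q"
    and s: "s \<in> carrier R" and u: "u \<in> left_gen R Y"
  shows "x \<otimes> s \<otimes> u \<in> left_gen R (Q <#> Y)"
proof -
  have QY: "Q <#> Y \<subseteq> carrier R" using Q Y by (rule set_mult_closed)
  have xc: "x \<in> carrier R" and xQ: "\<And>s. s \<in> carrier R \<Longrightarrow> x \<otimes> s \<in> left_gen R Q"
    using x unfolding ext_ideal_def by auto
  let ?M = "{u \<in> carrier R. \<forall>s\<in>carrier R. x \<otimes> s \<otimes> u \<in> left_gen R (Q <#> Y)}"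
  have "left_gen R Y \<subseteq> ?M"
  proof (rule left_gen_subsetI[OF Y])
    show "\<zero> \<in> ?M" using xc zero_in_left_gen by auto
    fix t y u assume t: "t \<in> carrier R" and y: "y \<in> Y" and u: "u \<in> ?M"
    have yc: "y \<in> carrier R" using y Y by auto
    have "x \<otimes> s \<otimes> (t \<otimes> y \<oplus> u) \<in> left_gen R (Q <#> Y)" if s: "s \<in> carrier R" for s
    proof -
      have "x \<otimes> s \<otimes> (t \<otimes> y \<oplus> u) = x \<otimes> (s \<otimes> t) \<otimes> y \<oplus> x \<otimes> s \<otimes> u"
        using xc s t yc u by (simp add: r_distr m_assoc)
      moreover have "x \<otimes> (s \<otimes> t) \<otimes> y \<in> left_gen R (Q <#> Y)"
        using xQ[of "s \<otimes> t"] s t by (intro left_gen_mult_right[OF Q Y _ y]) simp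
      moreover have "x \<otimes> s \<otimes> u \<in> left_gen R (Q <#> Y)" using u s by simp
      ultimately show ?thesis using left_gen_add[OF QY] by simp
    qed
    then show "t \<otimes> y \<oplus> u \<in> ?M" using t yc u by auto
  qed
  then show ?thesis using u s by auto
qed

lemma prime_not_subset_left_gen_set_prod:
  assumes P: "prime_ideal_nc R P" and Qs: "\<forall>Q\<in>set Qs. Q \<subseteq> carrier R \<and> \<not> ext_ideal R Q \<subseteq> P"
  shows "\<not> left_gen R (set_prod R Qs) \<subseteq> P"
  using Qs
proof (induction Qs)
  case Nil
  have "\<one> \<notin> P" using P ideal.one_imp_carrier unfolding prime_ideal_nc_def by blast
  moreover have "\<one> \<in> left_gen R {\<one>}" using subset_left_gen[of "{\<one>}"] by simp
  ultimately show ?case by auto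
next
  case (Cons Q Qs)
  then obtain u where u: "u \<in> left_gen R (set_prod R Qs)" "u \<notin> P" by auto
  from Cons.prems obtain x where x: "x \<in> ext_ideal R Q" "x \<notin> P" and Qc: "Q \<subseteq> carrier R" by auto
  have Pc: "set_prod R Qs \<subseteq> carrier R" using Cons.prems by (simp add: set_prod_closed)
  have "x \<in> carrier R" "u \<in> carrier R"
    using x u left_gen_closed[OF Pc] by (auto simp: ext_ideal_def)
  then obtain s where s: "s \<in> carrier R" "x \<otimes> s \<otimes> u \<notin> P"
    using P x u unfolding prime_ideal_nc_def by blast
  have "x \<otimes> s \<otimes> u \<in> left_gen R (set_prod R (Q # Qs))"
    using ext_ideal_mult_left_gen[OF Qc Pc x(1) s(1) u(1)] by simp
  with s show ?case by blast
qed

lemma prime_ext_ideal_subset: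
  assumes P: "prime_ideal_nc R P" and Qs: "\<forall>Q\<in>set Qs. Q \<subseteq> carrier R"
    and QsP: "set_prod R Qs \<subseteq> P"
  shows "\<exists>Q\<in>set Qs. ext_ideal R Q \<subseteq> P"
proof -
  have "left_gen R (set_prod R Qs) \<subseteq> P"
    using P QsP by (intro left_gen_subset_ideal) (simp_all add: prime_ideal_nc_def)
  then show ?thesis using prime_not_subset_left_gen_set_prod[OF P] Qs by blast
qed

end

theorem lemma3p14:
  fixes S :: "('a, 'b) ring_scheme" and H :: "'a set"
  assumes "ring S"
    and "subring H S"
    and "goldie_hyp (S\<lparr>carrier := H\<rparr>)"
    and "goldie_hyp S"
    and "P \<in> Spec S"
  shows "\<exists>Q. minimal_prime_over (S\<lparr>carrier := H\<rparr>) (P \<inter> H) Q \<and> ext_ideal S Q \<subseteq> P"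
proof -
  interpret S: ring S by (rule assms(1))
  interpret R: ring "S\<lparr>carrier := H\<rparr>" by (rule S.subring_is_ring[OF assms(2)])
  have P: "prime_ideal_nc S P" using assms(5) by (simp add: Spec_def)
  then have "ideal (P \<inter> H) (S\<lparr>carrier := H\<rparr>)"
    using assms(2) by (intro S.ideal_inter_subring) (simp_all add: prime_ideal_nc_def)
  with assms(3) obtain Qs where Qs: "\<forall>Q\<in>set Qs. Q \<in> Spec (S\<lparr>carrier := H\<rparr>) \<and> P \<inter> H \<subseteq> Q"
    and QsP: "set_prod S Qs \<subseteq> P \<inter> H"
    by (auto elim: R.goldie_hyp_prime_product_subset)
  have "\<forall>Q\<in>set Qs. Q \<subseteq> carrier S"
    using Qs R.Spec_subset_carrier subringE(1)[OF assms(2)] by fastforce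
  with P QsP obtain Q where Q: "Q \<in> set Qs" "ext_ideal S Q \<subseteq> P"
    using S.prime_ext_ideal_subset by blast
  from Qs Q(1) have "Q \<in> Spec (S\<lparr>carrier := H\<rparr>)" "P \<inter> H \<subseteq> Q" by auto
  then obtain M where "minimal_prime_over (S\<lparr>carrier := H\<rparr>) (P \<inter> H) M" "M \<subseteq> Q"
    by (rule R.exists_minimal_prime_over_subset)
  with Q(2) show ?thesis using ext_ideal_mono by blast
qed

end
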